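(* If $E$ is a hereditary approximation space having a countable basis, then $\bigcup_{\alpha<\aleph_1}\mathbf{D}_\alpha(E)=\mathbf{\Delta}^0_2(E)$.
   Context: Approximation relation: a binary relation $\ll$ on a topological basis $\mathcal{B}$ of $E$ such that for all $U,V,T\in\mathcal{B}$: (1) $U\ll V\Rightarrow V\subseteq U$; (2) $U\subseteq T$ and $U\ll V$ imply $T\ll V$; (3) for every $x\in U$ there is $W\in\mathcal{B}$ with $x\in W$ and $U\ll W$; (4) every sequence $(U_i)$ in $\mathcal{B}$ with $U_i\ll U_{i+1}$ for all $i$ has $\bigcap_iU_i\ne\emptyset$. Hereditary: for every closed $C\subseteq E$, the relation $\ll_C$ on $\{C\cap U:U\in\mathcal{B},C\cap U\ne\emptyset\}$, given by $P\ll_C Q$ iff $P=C\cap U$, $Q=C\cap V$ for some $U,V\in\mathcal{B}$ with $U\ll V$, is an approximation relation for the subspace $C$. A hereditary approximation space is one admitting a hereditary approximation relation. $\mathbf{\Sigma}^0_2(E)$: countable unions of differences $U\setminus V$ of open sets; $\mathbf{\Pi}^0_2(E)$: complements; $\mathbf{\Delta}^0_2(E)$: their intersection. Parity: ordinal $\lambda+n$ ($\lambda$ zero or limit, $n<\omega$) has the parity of $n$; $\alpha\sim\beta$ means same parity. $D_\alpha((A_\beta)_{\beta<\alpha})=\bigcup_{\beta<\alpha,\beta\not\sim\alpha}(A_\beta\setminus\bigcup_{\gamma<\beta}A_\gamma)$, and $\mathbf{D}_\alpha(E)$ is the class of such sets with all $A_\beta$ open. *)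

theory Defs
  imports "HOL-Analysis.Analysis"
begin

definition is_basis :: "'a topology \<Rightarrow> 'a set set \<Rightarrow> bool" where
  "is_basis E B \<longleftrightarrow> (\<forall>U\<in>B. openin E U) \<and>
     (\<forall>U. openin E U \<longrightarrow> (\<exists>F. F \<subseteq> B \<and> \<Union>F = U))"

definition has_countable_basis :: "'a topology \<Rightarrow> bool" where
  "has_countable_basis E \<longleftrightarrow> (\<exists>B. countable B \<and> is_basis E B)"

definition approx_rel :: "'a topology \<Rightarrow> 'a set set \<Rightarrow> ('a set \<Rightarrow> 'a set \<Rightarrow> bool) \<Rightarrow> bool" where
  "approx_rel E B R \<longleftrightarrow> is_basis E B \<and>
     (\<forall>U\<in>B. \<forall>V\<in>B. R U V \<longrightarrow> V \<subseteq> U) \<and>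
     (\<forall>U\<in>B. \<forall>V\<in>B. \<forall>T\<in>B. U \<subseteq> T \<and> R U V \<longrightarrow> R T V) \<and>
     (\<forall>U\<in>B. \<forall>x\<in>U. \<exists>W\<in>B. x \<in> W \<and> R U W) \<and>
     (\<forall>S :: nat \<Rightarrow> 'a set. (\<forall>i. S i \<in> B) \<and> (\<forall>i. R (S i) (S (Suc i)))
        \<longrightarrow> (\<Inter>i. S i) \<noteq> {})"

definition trace_basis :: "'a set \<Rightarrow> 'a set set \<Rightarrow> 'a set set" where
  "trace_basis C B = {C \<inter> U | U. U \<in> B \<and> C \<inter> U \<noteq> {}}"

definition trace_rel :: "'a set \<Rightarrow> 'a set set \<Rightarrow> ('a set \<Rightarrow> 'a set \<Rightarrow> bool)
    \<Rightarrow> 'a set \<Rightarrow> 'a set \<Rightarrow> bool" where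
  "trace_rel C B R P Q \<longleftrightarrow> (\<exists>U\<in>B. \<exists>V\<in>B. P = C \<inter> U \<and> Q = C \<inter> V \<and> R U V)"

definition hereditary_approx_rel :: "'a topology \<Rightarrow> 'a set set \<Rightarrow> ('a set \<Rightarrow> 'a set \<Rightarrow> bool) \<Rightarrow> bool" where
  "hereditary_approx_rel E B R \<longleftrightarrow> approx_rel E B R \<and>
     (\<forall>C. closedin E C \<longrightarrow>
        approx_rel (subtopology E C) (trace_basis C B) (trace_rel C B R))"

definition hereditary_approx_space :: "'a topology \<Rightarrow> bool" where
  "hereditary_approx_space E \<longleftrightarrow> (\<exists>B R. hereditary_approx_rel E B R)"

definition sigma02 :: "'a topology \<Rightarrow> 'a set \<Rightarrow> bool" where
  "sigma02 E S \<longleftrightarrow> (\<exists>U V :: nat \<Rightarrow> 'a set. (\<forall>n. openin E (U n) \<and> openin E (V n))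
      \<and> S = (\<Union>n. U n - V n))"

definition pi02 :: "'a topology \<Rightarrow> 'a set \<Rightarrow> bool" where
  "pi02 E S \<longleftrightarrow> S \<subseteq> topspace E \<and> sigma02 E (topspace E - S)"

definition delta02 :: "'a topology \<Rightarrow> 'a set \<Rightarrow> bool" where
  "delta02 E S \<longleftrightarrow> sigma02 E S \<and> pi02 E S"

text \<open>A countable ordinal alpha is represented by a (reflexive, Isabelle-style) well-order r on a
subset of nat having a greatest element tp; the ordinals beta < alpha are the elements strictly
below tp, and tp itself plays the role of alpha (the order type of r is alpha+1).
Every countable ordinal arises this way, and every such r gives a countable ordinal.\<close>

definition strict_below :: "nat rel \<Rightarrow> nat \<Rightarrow> nat \<Rightarrow> bool" where
  "strict_below r x y \<longleftrightarrow> (x, y) \<in> r \<and> x \<noteq> y"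

definition limit_or_zero :: "nat rel \<Rightarrow> nat \<Rightarrow> bool" where
  "limit_or_zero r d \<longleftrightarrow> d \<in> Field r \<and>
     \<not> (\<exists>g. strict_below r g d \<and> \<not> (\<exists>e. strict_below r g e \<and> strict_below r e d))"

text \<open>For b = lambda + n (lambda zero or limit), the finite part n is the number of g with
lambda \<le> g < b, i.e. of g < b such that no zero-or-limit element lies in (g, b].\<close>
definition finite_part :: "nat rel \<Rightarrow> nat \<Rightarrow> nat" where
  "finite_part r b = card {g. strict_below r g b \<and>
      (\<forall>d. strict_below r g d \<and> (d, b) \<in> r \<longrightarrow> \<not> limit_or_zero r d)}"

definition same_parity :: "nat rel \<Rightarrow> nat \<Rightarrow> nat \<Rightarrow> bool" where
  "same_parity r a b \<longleftrightarrow> (even (finite_part r a) \<longleftrightarrow> even (finite_part r b))"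

definition countable_ordinal_code :: "nat rel \<Rightarrow> nat \<Rightarrow> bool" where
  "countable_ordinal_code r tp \<longleftrightarrow> Well_order r \<and> tp \<in> Field r \<and>
     (\<forall>x\<in>Field r. (x, tp) \<in> r)"

definition D_op :: "nat rel \<Rightarrow> nat \<Rightarrow> (nat \<Rightarrow> 'a set) \<Rightarrow> 'a set" where
  "D_op r tp A = (\<Union>b \<in> {b. strict_below r b tp \<and> \<not> same_parity r b tp}.
       A b - (\<Union>g \<in> {g. strict_below r g b}. A g))"

definition D_class :: "'a topology \<Rightarrow> nat rel \<Rightarrow> nat \<Rightarrow> 'a set set" where
  "D_class E r tp = {D_op r tp A | A. \<forall>b. strict_below r b tp \<longrightarrow> openin E (A b)}"

definition D_countable_union :: "'a topology \<Rightarrow> 'a set set" where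
  "D_countable_union E = (\<Union>{D_class E r tp | r tp. countable_ordinal_code r tp})"

end

(*
  A set D_alpha(A) is Delta^0_2: it is the union of the differences A_b - (UN g<b. A_g) over the
  indices b of the wrong parity, and its complement is the union of the same differences over
  the indices of the right parity together with the closed set outside all A_b, because every
  point of UN b. A_b has a unique first index.

  Conversely, the approximation relation yields a Baire category theorem on every closed
  subspace, so a Delta^0_2 set S is resolvable: every nonempty closed C contains a nonempty
  relatively open piece lying inside S or missing S.  Iterating transfinitely from the empty set
  the step that adds to an open G all points having a neighbourhood whose part outside G lies
  in S or misses S, resolvability makes the resulting chain of open sets grow until it exhausts
  the space, and a countable basis makes the chain countable.  Attach to each element G of the
  chain the ordinals lambda_G + n, with A at lambda_G the union of G and the points where S is
  missed, and A at lambda_G + n (n > 0) the next element of the chain.  If G is the last element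
  of the chain avoiding a point x, then x first appears at lambda_G + 1 when x is in S and at
  lambda_G otherwise, so D_alpha(A) = S.
*)

theory Submission
  imports Defs "HOL-Library.Bourbaki_Witt_Fixpoint"
begin

section \<open>Approximation spaces are Baire spaces\<close>

lemma is_basis_nbhd:
  assumes "is_basis E B" "openin E U" "x \<in> U"
  obtains W where "W \<in> B" "x \<in> W" "W \<subseteq> U"
proof -
  from assms(1,2) obtain F where "F \<subseteq> B" "\<Union>F = U"
    unfolding is_basis_def by meson
  with assms(3) that show thesis by blast
qed

lemma approx_rel_basis: "approx_rel E B R \<Longrightarrow> is_basis E B"
  unfolding approx_rel_def by (elim conjE) assumption

lemma approx_rel_open: "approx_rel E B R \<Longrightarrow> U \<in> B \<Longrightarrow> openin E U"
  unfolding approx_rel_def is_basis_def by (elim conjE) (rule bspec)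

lemma approx_rel_shrinks:
  assumes "approx_rel E B R" "U \<in> B" "V \<in> B" "R U V"
  shows "V \<subseteq> U"
proof -
  from assms(1) have "\<forall>U\<in>B. \<forall>V\<in>B. R U V \<longrightarrow> V \<subseteq> U"
    unfolding approx_rel_def by (elim conjE) assumption
  with assms(2-) show ?thesis by blast
qed

lemma approx_rel_mono:
  assumes "approx_rel E B R" "U \<in> B" "V \<in> B" "T \<in> B" "U \<subseteq> T" "R U V"
  shows "R T V"
proof -
  from assms(1) have "\<forall>U\<in>B. \<forall>V\<in>B. \<forall>T\<in>B. U \<subseteq> T \<and> R U V \<longrightarrow> R T V"
    unfolding approx_rel_def by (elim conjE) assumption
  with assms(2-) show ?thesis by blast
qed

lemma approx_rel_point:
  assumes "approx_rel E B R" "U \<in> B" "x \<in> U"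
  obtains W where "W \<in> B" "x \<in> W" "R U W"
proof -
  from assms(1) have "\<forall>U\<in>B. \<forall>x\<in>U. \<exists>W\<in>B. x \<in> W \<and> R U W"
    unfolding approx_rel_def by (elim conjE) assumption
  with assms(2,3) that show ?thesis by blast
qed

lemma approx_rel_chain_Inter:
  assumes "approx_rel E B R" "\<And>i. S i \<in> B" "\<And>i. R (S i) (S (Suc i))"
  shows "(\<Inter>i. S i) \<noteq> {}"
proof -
  have "\<forall>S. (\<forall>i. S i \<in> B) \<and> (\<forall>i. R (S i) (S (Suc i))) \<longrightarrow> (\<Inter>i. S i) \<noteq> {}"
    using assms(1) unfolding approx_rel_def by (elim conjE) assumption
  with assms(2,3) show ?thesis by blast
qed

lemma approx_rel_refine:
  assumes approx: "approx_rel E B R" and P: "P \<in> B" and Z: "openin E Z" "x \<in> Z" "Z \<subseteq> P"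
  obtains W where "W \<in> B" "x \<in> W" "W \<subseteq> Z" "R P W"
proof -
  obtain W0 where W0: "W0 \<in> B" "x \<in> W0" "W0 \<subseteq> Z"
    using is_basis_nbhd[OF approx_rel_basis[OF approx] Z(1,2)] .
  with approx_rel_point[OF approx] obtain W where W: "W \<in> B" "x \<in> W" "R W0 W" by metis
  have "W \<subseteq> Z" using approx_rel_shrinks[OF approx W0(1) W(1,3)] W0(3) by (rule order_trans)
  moreover have "R P W" using approx_rel_mono[OF approx W0(1) W(1) P _ W(3)] W0(3) Z(3) by simp
  ultimately show thesis using that W(1,2) by blast
qed

lemma approx_rel_Baire:
  fixes U V :: "nat \<Rightarrow> 'a set"
  assumes approx: "approx_rel E B R" and ne: "topspace E \<noteq> {}"
    and open_U: "\<And>k. openin E (U k)" and open_V: "\<And>k. openin E (V k)"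
    and cover: "topspace E \<subseteq> (\<Union>k. U k - V k)"
  obtains k W where "openin E W" "W \<noteq> {}" "W \<subseteq> U k - V k"
proof -
  note open_B = approx_rel_open[OF approx]
  have "\<exists>k W. openin E W \<and> W \<noteq> {} \<and> W \<subseteq> U k - V k"
  proof (rule ccontr)
    assume no_interior: "\<nexists>k W. openin E W \<and> W \<noteq> {} \<and> W \<subseteq> U k - V k"
    have avoid: "\<exists>W. (W \<in> B \<and> W \<noteq> {}) \<and> W \<inter> (U k - V k) = {} \<and> R P W"
      if P: "P \<in> B \<and> P \<noteq> {}" for k P
    proof -
      have "\<exists>Z. openin E Z \<and> Z \<noteq> {} \<and> Z \<subseteq> P \<and> Z \<inter> (U k - V k) = {}"
      proof (cases "P \<inter> U k = {}")
        case True
        then show ?thesis using P open_B by blast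
      next
        case False
        have "openin E (P \<inter> U k)" using P open_B open_U by blast
        with False no_interior have "P \<inter> U k \<inter> V k \<noteq> {}" by blast
        moreover have "openin E (P \<inter> U k \<inter> V k)" using P open_B open_U open_V by blast
        ultimately show ?thesis by blast
      qed
      then obtain Z x where Z: "openin E Z" "x \<in> Z" "Z \<subseteq> P" "Z \<inter> (U k - V k) = {}" by blast
      with P obtain W where "W \<in> B" "x \<in> W" "W \<subseteq> Z" "R P W"
        using approx_rel_refine[OF approx] by metis
      with Z(4) show ?thesis by blast
    qed
    from ne obtain x0 where "x0 \<in> topspace E" by blast
    with is_basis_nbhd[OF approx_rel_basis[OF approx] openin_topspace] obtain P0
      where "P0 \<in> B \<and> P0 \<noteq> {}" by blast
    then have "\<exists>P. \<forall>k. (P k \<in> B \<and> P k \<noteq> {}) \<and> P (Suc k) \<inter> (U k - V k) = {} \<and> R (P k) (P (Suc k))"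
      using avoid by (intro dependent_nat_choice) blast+
    then obtain P where P: "\<And>k. P k \<in> B" "\<And>k. P (Suc k) \<inter> (U k - V k) = {}"
      "\<And>k. R (P k) (P (Suc k))" by blast
    have "(\<Inter>k. P k) \<noteq> {}" by (rule approx_rel_chain_Inter[OF approx, of P]) (use P in auto)
    then obtain x where x: "\<And>k. x \<in> P k" by blast
    then have "x \<in> topspace E" using open_B[OF P(1)] openin_subset by blast
    with cover obtain k where "x \<in> U k - V k" by blast
    with P(2) x show False by blast
  qed
  then obtain k W where "openin E W" "W \<noteq> {}" "W \<subseteq> U k - V k" by blast
  then show thesis by (rule that)
qed

section \<open>The difference hierarchy lies in \<open>\<Delta>\<^sup>0\<^sub>2\<close>\<close>

lemma sigma02I:
  "(\<And>n. openin E (U n)) \<Longrightarrow> (\<And>n. openin E (V n)) \<Longrightarrow> S = (\<Union>n::nat. U n - V n) \<Longrightarrow> sigma02 E S"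
  unfolding sigma02_def by (intro exI[of _ U] exI[of _ V]) simp

lemma sigma02_UN_nat:
  assumes "\<And>n::nat. sigma02 E (S n)"
  shows "sigma02 E (\<Union>n. S n)"
proof -
  from assms obtain U V :: "nat \<Rightarrow> nat \<Rightarrow> 'a set"
    where UV: "\<And>n m. openin E (U n m)" "\<And>n m. openin E (V n m)" "\<And>n. S n = (\<Union>m. U n m - V n m)"
    unfolding sigma02_def by metis
  define U' where "U' k = case_prod U (prod_decode k)" for k
  define V' where "V' k = case_prod V (prod_decode k)" for k
  have "(\<Union>n. S n) = (\<Union>k. U' k - V' k)"
  proof (intro equalityI subsetI)
    fix x assume "x \<in> (\<Union>n. S n)"
    then obtain n m where "x \<in> U n m - V n m" using UV(3) by blast
    then have "x \<in> U' (prod_encode (n, m)) - V' (prod_encode (n, m))"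
      unfolding U'_def V'_def by simp
    then show "x \<in> (\<Union>k. U' k - V' k)" by blast
  next
    fix x assume "x \<in> (\<Union>k. U' k - V' k)"
    then obtain k where k: "x \<in> U' k - V' k" by blast
    obtain n m where "prod_decode k = (n, m)" by (cases "prod_decode k")
    with k show "x \<in> (\<Union>n. S n)" unfolding U'_def V'_def UV(3) by auto
  qed
  moreover have "openin E (U' k) \<and> openin E (V' k)" for k
    unfolding U'_def V'_def using UV(1,2) by (simp split: prod.splits)
  ultimately show ?thesis by (intro sigma02I) auto
qed

lemma sigma02_diff: "openin E U \<Longrightarrow> openin E V \<Longrightarrow> sigma02 E (U - V)"
  by (rule sigma02I[of E "\<lambda>_. U" "\<lambda>_. V"]) simp_all

lemma sigma02_empty: "sigma02 E {}"
  using sigma02_diff[OF openin_empty openin_empty] by simp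

lemma sigma02_UN:
  assumes "\<And>n::nat. n \<in> I \<Longrightarrow> sigma02 E (S n)"
  shows "sigma02 E (\<Union>n\<in>I. S n)"
proof -
  have "(\<Union>n\<in>I. S n) = (\<Union>n. if n \<in> I then S n else {})" by auto
  moreover have "sigma02 E (if n \<in> I then S n else {})" for n
    by (cases "n \<in> I") (simp_all add: assms sigma02_empty)
  ultimately show ?thesis using sigma02_UN_nat[of E "\<lambda>n. if n \<in> I then S n else {}"] by simp
qed

lemma sigma02_Un:
  assumes "sigma02 E S" "sigma02 E T"
  shows "sigma02 E (S \<union> T)"
proof -
  have "S \<union> T = (\<Union>n\<in>{0::nat, 1}. if n = 0 then S else T)" by auto
  moreover have "sigma02 E (\<Union>n\<in>{0::nat, 1}. if n = 0 then S else T)"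
    by (rule sigma02_UN) (use assms in auto)
  ultimately show ?thesis by simp
qed

lemma strict_below_trans:
  assumes "Well_order r" "strict_below r a b" "strict_below r b c"
  shows "strict_below r a c"
proof -
  have "trans r" "antisym r" using assms(1) by (auto simp: order_on_defs)
  with assms(2,3) show ?thesis
    unfolding strict_below_def by (metis antisymD transD)
qed

lemma first_index_exists:
  assumes "Well_order r" "strict_below r b0 c" "x \<in> A b0"
  obtains b where "strict_below r b c" "x \<in> A b" "\<And>g. strict_below r g b \<Longrightarrow> x \<notin> A g"
proof -
  define K where "K = {b. strict_below r b c \<and> x \<in> A b}"
  have "wf (r - Id)" using assms(1) by (simp add: well_order_on_def)
  moreover have "b0 \<in> K" using assms(2,3) unfolding K_def by simp
  ultimately obtain b where b: "b \<in> K" and least: "\<And>g. (g, b) \<in> r - Id \<Longrightarrow> g \<notin> K"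
    by (rule wfE_min) blast
  show thesis
  proof (rule that)
    show "strict_below r b c" "x \<in> A b" using b unfolding K_def by auto
    show "x \<notin> A g" if "strict_below r g b" for g
      using least[of g] that strict_below_trans[OF assms(1) that] b
      unfolding strict_below_def K_def by auto
  qed
qed

lemma first_index_unique:
  assumes "Well_order r" "b \<in> Field r" "b' \<in> Field r" "x \<in> A b" "x \<in> A b'"
    and "\<And>g. strict_below r g b \<Longrightarrow> x \<notin> A g" "\<And>g. strict_below r g b' \<Longrightarrow> x \<notin> A g"
  shows "b = b'"
proof (rule ccontr)
  assume "b \<noteq> b'"
  moreover have "total_on (Field r) r" using assms(1) by (simp add: order_on_defs)
  ultimately have "strict_below r b b' \<or> strict_below r b' b"
    using assms(2,3) unfolding strict_below_def total_on_def by blast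
  with assms(4-) show False by blast
qed

lemma D_op_subset: "D_op r c A \<subseteq> (\<Union>b\<in>{b. strict_below r b c}. A b)"
  unfolding D_op_def by blast

lemma D_op_complement:
  assumes wo: "Well_order r"
  shows "(\<Union>b\<in>{b. strict_below r b c}. A b) - D_op r c A
    = (\<Union>b\<in>{b. strict_below r b c \<and> same_parity r b c}. A b - (\<Union>g\<in>{g. strict_below r g b}. A g))"
    (is "?L = ?R")
proof (intro equalityI subsetI)
  fix x assume "x \<in> ?L"
  then obtain b0 where b0: "strict_below r b0 c" "x \<in> A b0" and "x \<notin> D_op r c A" by blast
  moreover obtain b where
    "strict_below r b c" "x \<in> A b" "\<And>g. strict_below r g b \<Longrightarrow> x \<notin> A g"
    by (rule first_index_exists[where A = A, OF wo b0]) blast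
  ultimately show "x \<in> ?R" unfolding D_op_def by blast
next
  fix x assume "x \<in> ?R"
  then obtain b where b: "strict_below r b c" "same_parity r b c" "x \<in> A b"
    "\<And>g. strict_below r g b \<Longrightarrow> x \<notin> A g" by blast
  have "x \<notin> D_op r c A"
  proof
    assume "x \<in> D_op r c A"
    then obtain b' where b': "strict_below r b' c" "\<not> same_parity r b' c" "x \<in> A b'"
      "\<And>g. strict_below r g b' \<Longrightarrow> x \<notin> A g" unfolding D_op_def by blast
    have "b = b'"
      using first_index_unique[OF wo _ _ b(3) b'(3) b(4) b'(4)] b(1) b'(1)
      unfolding strict_below_def by (blast intro: FieldI1)
    with b(2) b'(2) show False by blast
  qed
  with b show "x \<in> ?L" by blast
qed

lemma D_op_delta02:
  assumes wo: "Well_order r" and open_A: "\<And>b. strict_below r b c \<Longrightarrow> openin E (A b)"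
  shows "delta02 E (D_op r c A)"
proof -
  define W where "W b = (\<Union>g\<in>{g. strict_below r g b}. A g)" for b
  define UA where "UA = (\<Union>b\<in>{b. strict_below r b c}. A b)"
  have open_W: "openin E (W b)" if "strict_below r b c" for b
    unfolding W_def using open_A strict_below_trans[OF wo _ that] by (intro openin_Union) auto
  have open_UA: "openin E UA" unfolding UA_def using open_A by (intro openin_Union) auto
  have D: "D_op r c A = (\<Union>b\<in>{b. strict_below r b c \<and> \<not> same_parity r b c}. A b - W b)"
    unfolding D_op_def W_def ..
  have "sigma02 E (D_op r c A)"
    unfolding D using open_A open_W by (intro sigma02_UN sigma02_diff) auto
  moreover have "D_op r c A \<subseteq> UA" "UA \<subseteq> topspace E"
    unfolding UA_def by (rule D_op_subset) (rule openin_subset[OF open_UA[unfolded UA_def]])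
  then have "D_op r c A \<subseteq> topspace E"
    and "topspace E - D_op r c A = (topspace E - UA) \<union> (UA - D_op r c A)" by blast+
  moreover have "UA - D_op r c A = (\<Union>b\<in>{b. strict_below r b c \<and> same_parity r b c}. A b - W b)"
    unfolding UA_def W_def by (rule D_op_complement[OF wo])
  then have "sigma02 E (UA - D_op r c A)"
    using open_A open_W by (auto intro!: sigma02_UN sigma02_diff)
  ultimately show ?thesis
    unfolding delta02_def pi02_def using open_UA by (simp add: sigma02_Un sigma02_diff)
qed

lemma D_countable_union_subset_delta02: "D_countable_union E \<subseteq> {S. delta02 E S}"
  unfolding D_countable_union_def D_class_def countable_ordinal_code_def
  using D_op_delta02 by blast

section \<open>\<open>\<Delta>\<^sup>0\<^sub>2\<close> sets are resolvable\<close>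

lemma sigma02_subtopology:
  assumes "sigma02 E S"
  shows "sigma02 (subtopology E C) (C \<inter> S)"
proof -
  from assms obtain U V :: "nat \<Rightarrow> 'a set"
    where UV: "\<And>n. openin E (U n)" "\<And>n. openin E (V n)" "S = (\<Union>n. U n - V n)"
    unfolding sigma02_def by metis
  then have "C \<inter> S = (\<Union>n. C \<inter> U n - C \<inter> V n)" by blast
  moreover have "openin (subtopology E C) (C \<inter> U n)" "openin (subtopology E C) (C \<inter> V n)" for n
    using UV(1,2) by (simp_all add: openin_subtopology_Int2)
  ultimately show ?thesis by (intro sigma02I[where U = "\<lambda>n. C \<inter> U n" and V = "\<lambda>n. C \<inter> V n"])
qed

lemma approx_rel_Baire_sigma02:
  assumes approx: "approx_rel E B R" and ne: "topspace E \<noteq> {}"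
    and "sigma02 E S" "sigma02 E T" and cover: "topspace E \<subseteq> S \<union> T"
  obtains W where "openin E W" "W \<noteq> {}" "W \<subseteq> S \<or> W \<subseteq> T"
proof -
  from assms(3) obtain US VS :: "nat \<Rightarrow> 'a set" where
    S: "\<And>n. openin E (US n)" "\<And>n. openin E (VS n)" "S = (\<Union>n. US n - VS n)"
    unfolding sigma02_def by metis
  from assms(4) obtain UT VT :: "nat \<Rightarrow> 'a set" where
    T: "\<And>n. openin E (UT n)" "\<And>n. openin E (VT n)" "T = (\<Union>n. UT n - VT n)"
    unfolding sigma02_def by metis
  define U where "U k = (if even k then US (k div 2) else UT (k div 2))" for k :: nat
  define V where "V k = (if even k then VS (k div 2) else VT (k div 2))" for k :: nat
  have "topspace E \<subseteq> (\<Union>k. U k - V k)"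
  proof
    fix x assume "x \<in> topspace E"
    with cover consider n where "x \<in> US n - VS n" | n where "x \<in> UT n - VT n"
      unfolding S(3) T(3) by blast
    then show "x \<in> (\<Union>k. U k - V k)"
    proof cases
      case 1
      then have "x \<in> U (2 * n) - V (2 * n)" unfolding U_def V_def by simp
      then show ?thesis by blast
    next
      case 2
      then have "x \<in> U (2 * n + 1) - V (2 * n + 1)" unfolding U_def V_def by simp
      then show ?thesis by blast
    qed
  qed
  moreover have "openin E (U k)" "openin E (V k)" for k
    unfolding U_def V_def using S(1,2) T(1,2) by simp_all
  ultimately obtain k W where W: "openin E W" "W \<noteq> {}" "W \<subseteq> U k - V k"
    using approx_rel_Baire[OF approx ne] by metis
  have "W \<subseteq> S \<or> W \<subseteq> T"
    using W(3) unfolding U_def V_def S(3) T(3) by (cases "even k") auto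
  with W(1,2) show thesis by (rule that)
qed

definition resolvable :: "'a topology \<Rightarrow> 'a set \<Rightarrow> bool" where
  "resolvable E S \<longleftrightarrow> (\<forall>C. closedin E C \<and> C \<noteq> {} \<longrightarrow>
     (\<exists>U. openin E U \<and> C \<inter> U \<noteq> {} \<and> (C \<inter> U \<subseteq> S \<or> C \<inter> U \<inter> S = {})))"

lemma delta02_resolvable:
  assumes "hereditary_approx_rel E B R" "delta02 E S"
  shows "resolvable E S"
  unfolding resolvable_def
proof (intro allI impI, elim conjE)
  fix C assume C: "closedin E C" "C \<noteq> {}"
  have approx: "approx_rel (subtopology E C) (trace_basis C B) (trace_rel C B R)"
    using assms(1) C(1) unfolding hereditary_approx_rel_def by blast
  have top: "topspace (subtopology E C) = C"
    using closedin_subset[OF C(1)] by auto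
  from assms(2) have "sigma02 E S" "sigma02 E (topspace E - S)"
    unfolding delta02_def pi02_def by auto
  then have "sigma02 (subtopology E C) (C \<inter> S)" "sigma02 (subtopology E C) (C \<inter> (topspace E - S))"
    by (simp_all add: sigma02_subtopology)
  moreover have "topspace (subtopology E C) \<subseteq> C \<inter> S \<union> C \<inter> (topspace E - S)"
    using closedin_subset[OF C(1)] top by blast
  ultimately obtain W where W: "openin (subtopology E C) W" "W \<noteq> {}"
    "W \<subseteq> C \<inter> S \<or> W \<subseteq> C \<inter> (topspace E - S)"
    using approx_rel_Baire_sigma02[OF approx] C(2) top by metis
  then obtain U where "openin E U" "W = U \<inter> C" unfolding openin_subtopology by blast
  with W(2,3) show "\<exists>U. openin E U \<and> C \<inter> U \<noteq> {} \<and> (C \<inter> U \<subseteq> S \<or> C \<inter> U \<inter> S = {})"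
    by blast
qed

section \<open>The decision chain of a resolvable set\<close>

definition decided_in :: "'a topology \<Rightarrow> 'a set \<Rightarrow> 'a set \<Rightarrow> 'a set" where
  "decided_in E S G = \<Union>{U. openin E U \<and> (topspace E - G) \<inter> U \<subseteq> S}"

definition decided_out :: "'a topology \<Rightarrow> 'a set \<Rightarrow> 'a set \<Rightarrow> 'a set" where
  "decided_out E S G = \<Union>{U. openin E U \<and> (topspace E - G) \<inter> U \<inter> S = {}}"

definition decide_step :: "'a topology \<Rightarrow> 'a set \<Rightarrow> 'a set \<Rightarrow> 'a set" where
  "decide_step E S G = G \<union> decided_in E S G \<union> decided_out E S G"

lemma openin_decided_in: "openin E (decided_in E S G)"
  unfolding decided_in_def by (intro openin_Union) auto

lemma openin_decided_out: "openin E (decided_out E S G)"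
  unfolding decided_out_def by (intro openin_Union) auto

lemma openin_decide_step: "openin E G \<Longrightarrow> openin E (decide_step E S G)"
  unfolding decide_step_def by (intro openin_Un openin_decided_in openin_decided_out)

lemma decide_step_increasing: "G \<subseteq> decide_step E S G"
  unfolding decide_step_def by blast

lemma decide_step_fixpoint:
  assumes "resolvable E S" "openin E G" "decide_step E S G \<subseteq> G"
  shows "topspace E \<subseteq> G"
proof (rule ccontr)
  assume "\<not> topspace E \<subseteq> G"
  then have "closedin E (topspace E - G)" "topspace E - G \<noteq> {}"
    using assms(2) by auto
  with assms(1) obtain U where U: "openin E U" "(topspace E - G) \<inter> U \<noteq> {}"
    "(topspace E - G) \<inter> U \<subseteq> S \<or> (topspace E - G) \<inter> U \<inter> S = {}"
    unfolding resolvable_def by blast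
  then have "U \<subseteq> decided_in E S G \<union> decided_out E S G"
    unfolding decided_in_def decided_out_def by blast
  with assms(3) U(2) show False unfolding decide_step_def by blast
qed

text \<open>The Bourbaki-Witt iteration of \<open>decide_step\<close> from the empty set is its transfinite
  iteration, with unions at limit stages.\<close>

interpretation decide: bourbaki_witt_fixpoint Sup "{(x, y). x \<subseteq> y}" "decide_step E S" for E S
  by (rule bourbaki_witt_fixpoint_complete_latticeI) (rule decide_step_increasing)

abbreviation decision_chain :: "'a topology \<Rightarrow> 'a set \<Rightarrow> 'a set set" where
  "decision_chain E S \<equiv> decide.iterates_above E S {}"

lemma decision_chain_open: "G \<in> decision_chain E S \<Longrightarrow> openin E G"
proof (induction rule: decide.iterates_above.induct)
  case (step G)
  then show ?case by (simp add: openin_decide_step)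
qed (auto intro: openin_Union)

lemma decision_chain_linear:
  assumes "G \<in> decision_chain E S" "H \<in> decision_chain E S"
  shows "G \<subseteq> H \<or> H \<subseteq> G"
  using in_ChainsD[OF decide.chain_iterates_above assms] by (simp add: Field_def)

lemma decision_chain_Union:
  assumes "M \<subseteq> decision_chain E S"
  shows "\<Union>M \<in> decision_chain E S"
proof (cases "M = {}")
  case True
  then show ?thesis by (simp add: decide.base)
next
  case False
  have "M \<in> Chains {(x, y). x \<subseteq> y}"
    by (rule in_Chains_subset[OF decide.chain_iterates_above assms]) (simp add: Field_def)
  with False assms show ?thesis by (auto intro: decide.Sup)
qed

lemma decision_chain_step_below:
  assumes "G \<in> decision_chain E S" "H \<in> decision_chain E S" "H \<subset> G"
  shows "decide_step E S H \<subseteq> G"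
proof -
  have Field: "X \<in> Field {(x, y). x \<subseteq> y}" for X :: "'a set" by (auto simp: Field_def)
  have "H \<notin> decide.iterates_above E S G"
    using decide.iterates_above_ge[OF _ Field] assms(3) by blast
  then have "G \<in> decide.iterates_above E S H"
    using decide.iterates_above_triangle[OF assms(1,2) Field] by blast
  then have "G \<in> decide.iterates_above E S (decide_step E S H)"
    using decide.iterates_above_successor[OF _ Field] assms(3) by blast
  then show ?thesis using decide.iterates_above_ge[OF _ Field] by blast
qed

lemma decision_chain_step_proper:
  assumes "resolvable E S" "G \<in> decision_chain E S" "\<not> topspace E \<subseteq> G"
  shows "\<not> decide_step E S G \<subseteq> G"
  using decide_step_fixpoint[OF assms(1) decision_chain_open[OF assms(2)]] assms(3) by blast

lemma decision_chain_has_least: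
  assumes "resolvable E S" "\<Y> \<subseteq> decision_chain E S" "\<Y> \<noteq> {}"
  shows "\<exists>H\<in>\<Y>. \<forall>Y\<in>\<Y>. H \<subseteq> Y"
proof -
  define H where "H = \<Union>{G \<in> decision_chain E S. \<forall>Y\<in>\<Y>. G \<subseteq> Y}"
  have H: "H \<in> decision_chain E S" unfolding H_def by (rule decision_chain_Union) blast
  have H_below: "H \<subseteq> Y" if "Y \<in> \<Y>" for Y using that unfolding H_def by blast
  have "H \<in> \<Y>"
  proof (rule ccontr)
    assume "H \<notin> \<Y>"
    with H_below have "H \<subset> Y" if "Y \<in> \<Y>" for Y using that by blast
    then have "decide_step E S H \<subseteq> Y" if "Y \<in> \<Y>" for Y
      using decision_chain_step_below[OF _ H] assms(2) that by blast
    moreover have "decide_step E S H \<in> decision_chain E S" using H by (rule decide.step)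
    ultimately have "decide_step E S H \<subseteq> H" unfolding H_def by blast
    then have "topspace E \<subseteq> H" using decision_chain_step_proper[OF assms(1) H] by blast
    moreover obtain Y where "Y \<in> \<Y>" using assms(3) by blast
    moreover have "Y \<subseteq> topspace E"
      using assms(2) \<open>Y \<in> \<Y>\<close> decision_chain_open openin_subset by blast
    ultimately have "Y = H" using H_below by (meson order_trans subset_antisym)
    with \<open>Y \<in> \<Y>\<close> \<open>H \<notin> \<Y>\<close> show False by blast
  qed
  with H_below show ?thesis by blast
qed

lemma countable_decision_chain:
  assumes "resolvable E S" "has_countable_basis E"
  shows "countable (decision_chain E S)"
proof -
  from assms(2) obtain B where B: "countable B" "is_basis E B"
    unfolding has_countable_basis_def by blast
  define T where "T = decision_chain E S - {topspace E}"
  \<comment> \<open>every non-final element of the chain is marked by a basic set entering at its successor\<close>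
  have "\<exists>W. W \<in> B \<and> W \<subseteq> decide_step E S G \<and> \<not> W \<subseteq> G" if G: "G \<in> T" for G
  proof -
    have GT: "G \<in> decision_chain E S" and "G \<noteq> topspace E" using G unfolding T_def by auto
    moreover have "G \<subseteq> topspace E" using openin_subset[OF decision_chain_open[OF GT]] .
    ultimately have "\<not> decide_step E S G \<subseteq> G"
      using decision_chain_step_proper[OF assms(1) GT] by blast
    then obtain x where x: "x \<in> decide_step E S G" "x \<notin> G" by blast
    obtain W where "W \<in> B" "x \<in> W" "W \<subseteq> decide_step E S G"
      using is_basis_nbhd[OF B(2) openin_decide_step[OF decision_chain_open[OF GT]] x(1)] .
    with x(2) show ?thesis by blast
  qed
  then obtain mark where mark: "\<And>G. G \<in> T \<Longrightarrow>
      mark G \<in> B \<and> mark G \<subseteq> decide_step E S G \<and> \<not> mark G \<subseteq> G"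
    by metis
  have "inj_on mark T"
  proof (rule inj_onI)
    fix G H assume G: "G \<in> T" and H: "H \<in> T" and eq: "mark G = mark H"
    have chain: "G \<in> decision_chain E S" "H \<in> decision_chain E S" using G H unfolding T_def by auto
    show "G = H"
    proof (rule ccontr)
      assume "G \<noteq> H"
      with decision_chain_linear[OF chain] have "H \<subset> G \<or> G \<subset> H" by blast
      then show False
        using decision_chain_step_below[OF chain] decision_chain_step_below[OF chain(2,1)]
          mark[OF G] mark[OF H] eq by blast
    qed
  qed
  moreover have "mark ` T \<subseteq> B" using mark by blast
  ultimately have "countable T"
    using countable_image_inj_on countable_subset B(1) by metis
  then show ?thesis unfolding T_def by simp
qed

section \<open>Coding the decision chain by a countable ordinal\<close>

text \<open>\<open>Some (G, n)\<close> stands for the ordinal \<open>\<lambda>\<^sub>G + n\<close>, where \<open>\<lambda>\<^sub>G\<close> is zero or a limit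
  because \<open>G\<close> has the whole of \<open>\<nat>\<close> attached to each of its predecessors; \<open>None\<close> stands for
  the top ordinal \<open>\<alpha>\<close>.\<close>

fun level_le :: "('a set \<times> nat) option \<Rightarrow> ('a set \<times> nat) option \<Rightarrow> bool" where
  "level_le _ None = True"
| "level_le None (Some _) = False"
| "level_le (Some (G, n)) (Some (H, m)) \<longleftrightarrow> G \<subset> H \<or> G = H \<and> n \<le> m"

definition levels :: "'a set set \<Rightarrow> ('a set \<times> nat) option set" where
  "levels T = insert None (Some ` (T \<times> UNIV))"

definition level_order :: "'a set set \<Rightarrow> ('a set \<times> nat) option rel" where
  "level_order T = {(x, y). x \<in> levels T \<and> y \<in> levels T \<and> level_le x y}"

lemma level_le_refl: "level_le x x"
  by (cases x) auto

lemma level_le_trans: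
  assumes "level_le x y" "level_le y z"
  shows "level_le x z"
proof (cases "x = None \<or> y = None \<or> z = None")
  case True
  with assms show ?thesis by (cases x; cases y; cases z) auto
next
  case False
  then obtain G n H m K k where "x = Some (G, n)" "y = Some (H, m)" "z = Some (K, k)" by auto
  with assms show ?thesis by (simp only: level_le.simps) (metis le_trans order.strict_trans)
qed

lemma level_le_antisym: "level_le x y \<Longrightarrow> level_le y x \<Longrightarrow> x = y"
  by (cases x; cases y) auto

lemma Some_in_levels_iff [simp]: "Some (G, n) \<in> levels T \<longleftrightarrow> G \<in> T"
  unfolding levels_def by auto

lemma None_in_levels [simp]: "None \<in> levels T"
  unfolding levels_def by simp

lemma Field_level_order: "Field (level_order T) = levels T"
proof
  show "Field (level_order T) \<subseteq> levels T" unfolding Field_def level_order_def by blast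
  show "levels T \<subseteq> Field (level_order T)"
  proof
    fix x assume "x \<in> levels T"
    then have "(x, x) \<in> level_order T" unfolding level_order_def by (simp add: level_le_refl)
    then show "x \<in> Field (level_order T)" by (rule FieldI1)
  qed
qed

lemma wf_level_order:
  assumes least: "\<And>Y. Y \<subseteq> T \<Longrightarrow> Y \<noteq> {} \<Longrightarrow> \<exists>H\<in>Y. \<forall>Z\<in>Y. H \<subseteq> Z"
  shows "wf (level_order T - Id)"
proof (rule wfI_min)
  fix x :: "('a set \<times> nat) option" and Q assume "x \<in> Q"
  show "\<exists>z\<in>Q. \<forall>y. (y, z) \<in> level_order T - Id \<longrightarrow> y \<notin> Q"
  proof (cases "\<exists>G n. G \<in> T \<and> Some (G, n) \<in> Q")
    case False
    have "y \<notin> Q" if "(y, x) \<in> level_order T - Id" for y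
    proof (cases x)
      case None
      with that False show ?thesis unfolding level_order_def levels_def by (cases y) auto
    next
      case (Some a)
      with that False \<open>x \<in> Q\<close> show ?thesis unfolding level_order_def levels_def by auto
    qed
    with \<open>x \<in> Q\<close> show ?thesis by blast
  next
    case True
    define Y where "Y = {G \<in> T. \<exists>n. Some (G, n) \<in> Q}"
    from True least[of Y] obtain G where G: "G \<in> Y" "\<And>Z. Z \<in> Y \<Longrightarrow> G \<subseteq> Z"
      unfolding Y_def by blast
    define n where "n = (LEAST n. Some (G, n) \<in> Q)"
    have n: "Some (G, n) \<in> Q" using G(1) unfolding Y_def n_def by (auto intro: LeastI)
    have "y \<notin> Q" if "(y, Some (G, n)) \<in> level_order T - Id" for y
    proof
      assume "y \<in> Q"
      from that have y: "y \<in> levels T" "level_le y (Some (G, n))" "y \<noteq> Some (G, n)"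
        unfolding level_order_def by auto
      then obtain H m where H: "y = Some (H, m)" "H \<in> T"
        by (cases y) (auto simp: levels_def)
      with \<open>y \<in> Q\<close> have "G \<subseteq> H" using G(2) unfolding Y_def by blast
      with y H have "H = G" "m < n" by auto
      with \<open>y \<in> Q\<close> H(1) show False unfolding n_def using not_less_Least by blast
    qed
    with n show ?thesis by blast
  qed
qed

lemma Well_order_level_order:
  assumes linear: "\<And>G H. G \<in> T \<Longrightarrow> H \<in> T \<Longrightarrow> G \<subseteq> H \<or> H \<subseteq> G"
    and least: "\<And>Y. Y \<subseteq> T \<Longrightarrow> Y \<noteq> {} \<Longrightarrow> \<exists>H\<in>Y. \<forall>Z\<in>Y. H \<subseteq> Z"
  shows "Well_order (level_order T)"
  unfolding well_order_on_def linear_order_on_def partial_order_on_def preorder_on_def Field_level_order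
proof (intro conjI wf_level_order[OF least])
  show "level_order T \<subseteq> levels T \<times> levels T" unfolding level_order_def by blast
  show "refl_on (levels T) (level_order T)"
    unfolding refl_on_def level_order_def using level_le_refl by auto
  show "trans (level_order T)"
    unfolding trans_def level_order_def using level_le_trans by blast
  show "antisym (level_order T)"
    unfolding antisym_def level_order_def using level_le_antisym by blast
  have "level_le x y \<or> level_le y x" if "x \<in> levels T" "y \<in> levels T" for x y
  proof (cases "x = None \<or> y = None")
    case True
    then show ?thesis by (cases x; cases y) auto
  next
    case False
    with that obtain G n H m where "x = Some (G, n)" "y = Some (H, m)" "G \<in> T" "H \<in> T"
      unfolding levels_def by auto
    with linear[of G H] show ?thesis by (simp only: level_le.simps) (metis le_cases psubsetI)
  qed
  then show "total_on (levels T) (level_order T)"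
    unfolding total_on_def level_order_def by blast
qed

locale level_code =
  fixes T :: "'a set set" and f :: "('a set \<times> nat) option \<Rightarrow> nat"
  assumes inj: "inj_on f (levels T)"
begin

definition code_order :: "nat rel" where
  "code_order = dir_image (level_order T) f"

lemma Field_code_order: "Field code_order = f ` levels T"
  unfolding code_order_def dir_image_Field Field_level_order ..

lemma code_order_iff:
  assumes "x \<in> levels T" "y \<in> levels T"
  shows "(f x, f y) \<in> code_order \<longleftrightarrow> level_le x y"
proof
  assume "(f x, f y) \<in> code_order"
  then obtain x' y' where "f x = f x'" "f y = f y'" "(x', y') \<in> level_order T"
    unfolding code_order_def dir_image_def by blast
  with assms inj show "level_le x y" unfolding level_order_def inj_on_def by auto
next
  assume "level_le x y"
  with assms show "(f x, f y) \<in> code_order"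
    unfolding code_order_def dir_image_def level_order_def by blast
qed

lemma strict_below_code_iff:
  assumes "x \<in> levels T" "y \<in> levels T"
  shows "strict_below code_order (f x) (f y) \<longleftrightarrow> level_le x y \<and> x \<noteq> y"
  using code_order_iff[OF assms] inj assms unfolding strict_below_def inj_on_def by metis

lemma code_orderE:
  assumes "(a, b) \<in> code_order"
  obtains x y where "x \<in> levels T" "y \<in> levels T" "a = f x" "b = f y"
  using assms unfolding code_order_def dir_image_def level_order_def by blast

lemma strict_below_codeE:
  assumes "strict_below code_order a (f y)" "y \<in> levels T"
  obtains x where "x \<in> levels T" "a = f x" "level_le x y" "x \<noteq> y"
proof -
  from assms(1) obtain x y' where "x \<in> levels T" "y' \<in> levels T" "a = f x" "f y = f y'"
    unfolding strict_below_def by (auto elim: code_orderE)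
  with assms strict_below_code_iff that show thesis by (metis inj inj_onD)
qed

lemma countable_ordinal_code_code_order:
  assumes "Well_order (level_order T)"
  shows "countable_ordinal_code code_order (f None)"
  unfolding countable_ordinal_code_def
proof (intro conjI ballI)
  show "Well_order code_order"
    unfolding code_order_def by (rule Well_order_dir_image[OF assms]) (simp add: Field_level_order inj)
  show "f None \<in> Field code_order" unfolding Field_code_order by simp
  show "(a, f None) \<in> code_order" if "a \<in> Field code_order" for a
    using that code_order_iff unfolding Field_code_order by auto
qed

lemma limit_or_zero_code:
  assumes y: "y \<in> levels T"
    and no_pred: "\<And>H m. H \<in> T \<Longrightarrow> level_le (Some (H, m)) y \<Longrightarrow> Some (H, m) \<noteq> y
      \<Longrightarrow> level_le (Some (H, Suc m)) y \<and> Some (H, Suc m) \<noteq> y"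
  shows "limit_or_zero code_order (f y)"
proof -
  have "\<exists>e. strict_below code_order g e \<and> strict_below code_order e (f y)"
    if g: "strict_below code_order g (f y)" for g
  proof -
    from strict_below_codeE[OF g y] obtain x where x: "x \<in> levels T" "g = f x" "level_le x y" "x \<noteq> y" .
    then obtain H m where H: "x = Some (H, m)" "H \<in> T" by (cases x) (auto elim: level_le.elims)
    have "strict_below code_order g (f (Some (H, Suc m)))"
      using x H strict_below_code_iff by simp
    moreover have "strict_below code_order (f (Some (H, Suc m))) (f y)"
      using no_pred[OF H(2)] x H y strict_below_code_iff by simp
    ultimately show ?thesis by blast
  qed
  moreover have "f y \<in> Field code_order" using y by (simp add: Field_code_order)
  ultimately show ?thesis unfolding limit_or_zero_def by blast
qed

lemma limit_or_zero_code_None: "limit_or_zero code_order (f None)"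
  by (rule limit_or_zero_code) simp_all

lemma limit_or_zero_code_Some:
  assumes "G \<in> T"
  shows "limit_or_zero code_order (f (Some (G, n))) \<longleftrightarrow> n = 0"
proof
  assume "limit_or_zero code_order (f (Some (G, n)))"
  show "n = 0"
  proof (rule ccontr)
    assume "n \<noteq> 0"
    then obtain k where n: "n = Suc k" using not0_implies_Suc by blast
    have "strict_below code_order (f (Some (G, k))) (f (Some (G, n)))"
      using assms n strict_below_code_iff by simp
    with \<open>limit_or_zero code_order (f (Some (G, n)))\<close> obtain e where
      e: "strict_below code_order (f (Some (G, k))) e" "strict_below code_order e (f (Some (G, n)))"
      unfolding limit_or_zero_def by blast
    from strict_below_codeE[OF e(2)] assms obtain z where
      z: "z \<in> levels T" "e = f z" "level_le z (Some (G, n))" "z \<noteq> Some (G, n)" by auto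
    with e(1) assms have "level_le (Some (G, k)) z" "Some (G, k) \<noteq> z"
      using strict_below_code_iff by auto
    with z(3,4) n show False by (cases z) auto
  qed
next
  assume "n = 0"
  show "limit_or_zero code_order (f (Some (G, n)))"
    by (rule limit_or_zero_code) (use assms \<open>n = 0\<close> in auto)
qed

lemma finite_part_code_None: "finite_part code_order (f None) = 0"
proof -
  have "(f None, f None) \<in> code_order" using code_order_iff by simp
  then have "{g. strict_below code_order g (f None) \<and> (\<forall>d. strict_below code_order g d
      \<and> (d, f None) \<in> code_order \<longrightarrow> \<not> limit_or_zero code_order d)} = {}"
    using limit_or_zero_code_None by blast
  then show ?thesis unfolding finite_part_def by (simp only: card.empty)
qed

lemma finite_part_code_Some:
  assumes G: "G \<in> T"
  shows "finite_part code_order (f (Some (G, n))) = n"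
proof -
  define b where "b = f (Some (G, n))"
  have "{g. strict_below code_order g b \<and> (\<forall>d. strict_below code_order g d \<and> (d, b) \<in> code_order
      \<longrightarrow> \<not> limit_or_zero code_order d)} = (\<lambda>m. f (Some (G, m))) ` {..<n}" (is "?P = ?R")
  proof (intro equalityI subsetI)
    fix g assume "g \<in> ?P"
    then have g: "strict_below code_order g b"
      and no_limit: "\<And>d. strict_below code_order g d \<Longrightarrow> (d, b) \<in> code_order \<Longrightarrow> \<not> limit_or_zero code_order d"
      by auto
    from strict_below_codeE[OF g[unfolded b_def]] G obtain x where
      x: "x \<in> levels T" "g = f x" "level_le x (Some (G, n))" "x \<noteq> Some (G, n)" by auto
    then obtain H m where H: "x = Some (H, m)" "H \<in> T" by (cases x) (auto elim: level_le.elims)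
    \<comment> \<open>a strictly smaller \<open>H\<close> would put the limit \<open>(G, 0)\<close> between \<open>g\<close> and \<open>b\<close>\<close>
    have "\<not> H \<subset> G"
    proof
      assume "H \<subset> G"
      then have "strict_below code_order g (f (Some (G, 0)))" "(f (Some (G, 0)), b) \<in> code_order"
        using x(2) H G strict_below_code_iff code_order_iff unfolding b_def by auto
      with no_limit show False using limit_or_zero_code_Some[OF G] by blast
    qed
    with x H have "H = G" "m < n" by auto
    with x(2) H(1) show "g \<in> ?R" by blast
  next
    fix g assume "g \<in> ?R"
    then obtain m where m: "m < n" "g = f (Some (G, m))" by blast
    have "\<not> limit_or_zero code_order d"
      if d: "strict_below code_order g d" "(d, b) \<in> code_order" for d
    proof -
      from d(2) obtain z where z: "z \<in> levels T" "d = f z"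
        by (auto elim: code_orderE)
      with d G m have "level_le (Some (G, m)) z" "Some (G, m) \<noteq> z" "level_le z (Some (G, n))"
        using strict_below_code_iff code_order_iff unfolding b_def by auto
      then obtain k where "z = Some (G, k)" "k \<noteq> 0"
        by (cases z) (auto elim: level_le.elims)
      with z G show ?thesis using limit_or_zero_code_Some by simp
    qed
    moreover have "strict_below code_order g b"
      using m G strict_below_code_iff unfolding b_def by simp
    ultimately show "g \<in> ?P" by blast
  qed
  moreover have "inj_on (\<lambda>m. f (Some (G, m))) {..<n}"
    by (rule inj_onI) (use inj G in \<open>auto dest: inj_onD\<close>)
  ultimately show ?thesis unfolding finite_part_def b_def by (simp add: card_image)
qed

lemma same_parity_code_None:
  assumes "G \<in> T"
  shows "same_parity code_order (f (Some (G, n))) (f None) \<longleftrightarrow> even n"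
  unfolding same_parity_def finite_part_code_Some[OF assms] finite_part_code_None by simp

lemma strict_below_code_None:
  "strict_below code_order b (f None) \<longleftrightarrow> (\<exists>G n. G \<in> T \<and> b = f (Some (G, n)))"
proof
  assume "strict_below code_order b (f None)"
  from strict_below_codeE[OF this] obtain x where "x \<in> levels T" "b = f x" "x \<noteq> None" by auto
  then show "\<exists>G n. G \<in> T \<and> b = f (Some (G, n))" unfolding levels_def by auto
next
  assume "\<exists>G n. G \<in> T \<and> b = f (Some (G, n))"
  then show "strict_below code_order b (f None)" using strict_below_code_iff by auto
qed

lemma D_op_code:
  "D_op code_order (f None) (\<lambda>k. L (inv_into (levels T) f k)) =
    {x. \<exists>G n. G \<in> T \<and> odd n \<and> x \<in> L (Some (G, n)) \<and>
      (\<forall>y\<in>levels T. level_le y (Some (G, n)) \<and> y \<noteq> Some (G, n) \<longrightarrow> x \<notin> L y)}"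
  (is "D_op _ _ ?A = ?R")
proof -
  have A: "?A (f y) = L y" if "y \<in> levels T" for y
    using inv_into_f_f[OF inj that] by simp
  have below: "strict_below code_order g (f (Some (G, n))) \<longleftrightarrow>
      (\<exists>y\<in>levels T. g = f y \<and> level_le y (Some (G, n)) \<and> y \<noteq> Some (G, n))" if "G \<in> T" for G n g
    using that strict_below_code_iff by (auto elim!: strict_below_codeE)
  show ?thesis
  proof (intro equalityI subsetI)
    fix x assume "x \<in> D_op code_order (f None) ?A"
    then obtain b where b: "strict_below code_order b (f None)" "\<not> same_parity code_order b (f None)"
      "x \<in> ?A b" "\<And>g. strict_below code_order g b \<Longrightarrow> x \<notin> ?A g"
      unfolding D_op_def by blast
    from b(1) obtain G n where G: "G \<in> T" "b = f (Some (G, n))"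
      unfolding strict_below_code_None by blast
    have "odd n" using b(2) G same_parity_code_None by simp
    moreover have "x \<in> L (Some (G, n))" using b(3) G A by simp
    moreover have "x \<notin> L y"
      if "y \<in> levels T" "level_le y (Some (G, n))" "y \<noteq> Some (G, n)" for y
    proof -
      have "strict_below code_order (f y) b" using that G below by blast
      with b(4) A[OF that(1)] show ?thesis by metis
    qed
    ultimately show "x \<in> ?R" using G(1) by blast
  next
    fix x assume "x \<in> ?R"
    then obtain G n where G: "G \<in> T" "odd n" "x \<in> L (Some (G, n))"
      "\<And>y. y \<in> levels T \<Longrightarrow> level_le y (Some (G, n)) \<Longrightarrow> y \<noteq> Some (G, n) \<Longrightarrow> x \<notin> L y"
      by blast
    have "strict_below code_order (f (Some (G, n))) (f None)"
      using G(1) strict_below_code_None by blast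
    moreover have "\<not> same_parity code_order (f (Some (G, n))) (f None)"
      using G(1,2) same_parity_code_None by simp
    moreover have "x \<in> ?A (f (Some (G, n)))" using G(1,3) A by simp
    moreover have "x \<notin> ?A g" if "strict_below code_order g (f (Some (G, n)))" for g
      using that G(1,4) A below by auto
    ultimately show "x \<in> D_op code_order (f None) ?A"
      unfolding D_op_def by blast
  qed
qed

end

section \<open>Resolvable sets lie in the difference hierarchy\<close>

definition last_avoiding :: "'a topology \<Rightarrow> 'a set \<Rightarrow> 'a \<Rightarrow> 'a set" where
  "last_avoiding E S x = \<Union>{G \<in> decision_chain E S. x \<notin> G}"

lemma last_avoiding_in_decision_chain: "last_avoiding E S x \<in> decision_chain E S"
  unfolding last_avoiding_def by (rule decision_chain_Union) blast

lemma not_in_last_avoiding: "x \<notin> last_avoiding E S x"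
  unfolding last_avoiding_def by blast

lemma in_decision_chain_iff:
  "G \<in> decision_chain E S \<Longrightarrow> x \<in> G \<longleftrightarrow> \<not> G \<subseteq> last_avoiding E S x"
  unfolding last_avoiding_def by blast

lemma in_decide_step_last_avoiding:
  assumes "resolvable E S" "x \<in> topspace E"
  shows "x \<in> decide_step E S (last_avoiding E S x)"
proof (rule ccontr)
  let ?G = "last_avoiding E S x"
  assume "x \<notin> decide_step E S ?G"
  moreover have "decide_step E S ?G \<in> decision_chain E S"
    using last_avoiding_in_decision_chain by (rule decide.step)
  ultimately have "decide_step E S ?G \<subseteq> ?G" using in_decision_chain_iff[of _ E S x] by blast
  then have "topspace E \<subseteq> ?G"
    using decision_chain_step_proper[OF assms(1) last_avoiding_in_decision_chain] by blast
  with assms(2) not_in_last_avoiding[of x E S] show False by blast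
qed

lemma in_decided_out_last_avoiding_iff:
  assumes "resolvable E S" "x \<in> topspace E"
  shows "x \<in> decided_out E S (last_avoiding E S x) \<longleftrightarrow> x \<notin> S"
proof -
  let ?G = "last_avoiding E S x"
  have x: "x \<in> topspace E - ?G" using assms(2) not_in_last_avoiding[of x E S] by blast
  have "x \<notin> S" if "x \<in> decided_out E S ?G"
    using that x unfolding decided_out_def by blast
  moreover have "x \<in> S" if "x \<in> decided_in E S ?G"
    using that x unfolding decided_in_def by blast
  ultimately show ?thesis
    using in_decide_step_last_avoiding[OF assms] x unfolding decide_step_def by blast
qed

definition level_set :: "'a topology \<Rightarrow> 'a set \<Rightarrow> ('a set \<times> nat) option \<Rightarrow> 'a set" where
  "level_set E S y = (case y of
      None \<Rightarrow> {}
    | Some (G, 0) \<Rightarrow> G \<union> decided_out E S G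
    | Some (G, Suc _) \<Rightarrow> decide_step E S G)"

lemma openin_level_set:
  assumes "y \<in> levels (decision_chain E S)"
  shows "openin E (level_set E S y)"
proof (cases y)
  case None
  then show ?thesis by (simp add: level_set_def)
next
  case (Some a)
  with assms obtain G n where "y = Some (G, n)" "G \<in> decision_chain E S"
    by (auto simp: levels_def)
  with decision_chain_open[of G E S] show ?thesis unfolding level_set_def
    by (auto split: nat.split intro: openin_Un openin_decided_out openin_decide_step)
qed

lemma level_set_subset_decide_step: "level_set E S (Some (G, n)) \<subseteq> decide_step E S G"
  unfolding level_set_def decide_step_def by (auto split: nat.split)

lemma level_set_supset: "G \<subseteq> level_set E S (Some (G, n))"
  unfolding level_set_def decide_step_def by (auto split: nat.split)

lemma in_level_set_iff:
  assumes res: "resolvable E S" and x: "x \<in> topspace E"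
    and H: "H \<in> decision_chain E S"
  shows "x \<in> level_set E S (Some (H, m)) \<longleftrightarrow>
    level_le (Some (last_avoiding E S x, if x \<in> S then 1 else 0)) (Some (H, m))"
proof -
  let ?G = "last_avoiding E S x"
  consider "H = ?G" | "H \<subset> ?G" | "?G \<subset> H"
    using decision_chain_linear[OF H last_avoiding_in_decision_chain] by blast
  then show ?thesis
  proof cases
    case 1
    show ?thesis
    proof (cases m)
      case 0
      have "x \<in> level_set E S (Some (H, m)) \<longleftrightarrow> x \<notin> S"
        unfolding 1 0 level_set_def
        using in_decided_out_last_avoiding_iff[OF res x] not_in_last_avoiding[of x E S] by simp
      then show ?thesis using 1 0 by simp
    next
      case (Suc k)
      have "x \<in> level_set E S (Some (H, m))"
        unfolding 1 Suc level_set_def using in_decide_step_last_avoiding[OF res x] by simp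
      then show ?thesis using 1 Suc by simp
    qed
  next
    case 2
    have "level_set E S (Some (H, m)) \<subseteq> ?G"
      using level_set_subset_decide_step[of E S H m]
        decision_chain_step_below[OF last_avoiding_in_decision_chain H 2] by (rule order_trans)
    then have "x \<notin> level_set E S (Some (H, m))" using not_in_last_avoiding[of x E S] by blast
    moreover have "\<not> ?G \<subset> H" "?G \<noteq> H" using 2 by auto
    ultimately show ?thesis by simp
  next
    case 3
    then have "x \<in> H" using in_decision_chain_iff[OF H, of x] by blast
    then have "x \<in> level_set E S (Some (H, m))" using level_set_supset[of H E S m] by blast
    with 3 show ?thesis by simp
  qed
qed

lemma first_odd_level_eq:
  assumes res: "resolvable E S" and S: "S \<subseteq> topspace E"
  shows "{x. \<exists>G n. G \<in> decision_chain E S \<and> odd n \<and> x \<in> level_set E S (Some (G, n)) \<and>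
      (\<forall>y\<in>levels (decision_chain E S). level_le y (Some (G, n)) \<and> y \<noteq> Some (G, n)
        \<longrightarrow> x \<notin> level_set E S y)} = S" (is "?D = S")
proof (intro equalityI subsetI)
  fix x assume "x \<in> ?D"
  then obtain G n where G: "G \<in> decision_chain E S" "odd n" "x \<in> level_set E S (Some (G, n))"
    and first: "\<And>y. y \<in> levels (decision_chain E S) \<Longrightarrow> level_le y (Some (G, n)) \<Longrightarrow>
      y \<noteq> Some (G, n) \<Longrightarrow> x \<notin> level_set E S y" by blast
  define l where "l = Some (last_avoiding E S x, if x \<in> S then 1 else 0 :: nat)"
  have x: "x \<in> topspace E"
    using G(3) openin_subset[OF openin_level_set[of "Some (G, n)" E S]] G(1) by auto
  have l: "l \<in> levels (decision_chain E S)"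
    unfolding l_def using last_avoiding_in_decision_chain by simp
  have "x \<in> level_set E S l"
    unfolding l_def by (simp add: in_level_set_iff[OF res x last_avoiding_in_decision_chain] level_le_refl)
  moreover have "level_le l (Some (G, n))"
    unfolding l_def using in_level_set_iff[OF res x G(1)] G(3) by simp
  ultimately have "l = Some (G, n)" using first[OF l] by blast
  with G(2) show "x \<in> S" unfolding l_def by (auto split: if_splits)
next
  fix x assume "x \<in> S"
  with S have x: "x \<in> topspace E" by blast
  let ?G = "last_avoiding E S x"
  have "x \<in> level_set E S (Some (?G, 1))"
    using in_level_set_iff[OF res x last_avoiding_in_decision_chain] \<open>x \<in> S\<close> by simp
  moreover have "x \<notin> level_set E S y"
    if y: "y \<in> levels (decision_chain E S)" "level_le y (Some (?G, 1))" "y \<noteq> Some (?G, 1)" for y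
  proof
    assume "x \<in> level_set E S y"
    from y obtain H m where H: "y = Some (H, m)" "H \<in> decision_chain E S"
      by (cases y) (auto simp: levels_def)
    with \<open>x \<in> level_set E S y\<close> have "level_le (Some (?G, 1)) y"
      using in_level_set_iff[OF res x H(2)] \<open>x \<in> S\<close> by simp
    with y(2,3) show False using level_le_antisym[OF y(2)] by blast
  qed
  ultimately show "x \<in> ?D" using last_avoiding_in_decision_chain[of E S x]
    by (intro CollectI exI[of _ ?G] exI[of _ "1 :: nat"]) auto
qed

lemma resolvable_in_D_countable_union:
  assumes res: "resolvable E S" and cb: "has_countable_basis E" and S: "S \<subseteq> topspace E"
  shows "S \<in> D_countable_union E"
proof -
  define T where "T = decision_chain E S"
  have wo: "Well_order (level_order T)" unfolding T_def
    using decision_chain_linear[of _ E S] decision_chain_has_least[OF res]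
    by (rule Well_order_level_order)
  have "countable (levels T)"
    unfolding levels_def T_def using countable_decision_chain[OF res cb] by simp
  then obtain f :: "('a set \<times> nat) option \<Rightarrow> nat" where "inj_on f (levels T)" by (rule countableE)
  then interpret level_code T f by unfold_locales
  define A where "A k = level_set E S (inv_into (levels T) f k)" for k
  have "openin E (A b)" if "strict_below code_order b (f None)" for b
  proof -
    from that obtain G n where "G \<in> T" "b = f (Some (G, n))"
      unfolding strict_below_code_None by blast
    then show ?thesis
      unfolding A_def using inv_into_f_f[OF inj] openin_level_set[of _ E S] unfolding T_def by simp
  qed
  moreover have "D_op code_order (f None) A = S"
    unfolding A_def D_op_code using first_odd_level_eq[OF res S, folded T_def] .
  ultimately have "S \<in> D_class E code_order (f None)"
    unfolding D_class_def by blast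
  with countable_ordinal_code_code_order[OF wo] show ?thesis
    unfolding D_countable_union_def by blast
qed

theorem corollary3p16:
  fixes E :: "'a topology"
  assumes "hereditary_approx_space E"
    and "has_countable_basis E"
  shows "D_countable_union E = {S. delta02 E S}"
proof
  show "D_countable_union E \<subseteq> {S. delta02 E S}" by (rule D_countable_union_subset_delta02)
  from assms(1) obtain B R where approx: "hereditary_approx_rel E B R"
    unfolding hereditary_approx_space_def by blast
  show "{S. delta02 E S} \<subseteq> D_countable_union E"
  proof
    fix S assume "S \<in> {S. delta02 E S}"
    then have S: "delta02 E S" by simp
    then have "S \<subseteq> topspace E" unfolding delta02_def pi02_def by blast
    then show "S \<in> D_countable_union E"
      by (intro resolvable_in_D_countable_union delta02_resolvable[OF approx S] assms(2))
  qed
qed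

end
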